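(* Let $\eta>0$ and let $\lambda$ be an $\eta$-mixable loss function. Then $\lambda$ is proper if and only if for each $\pi\in(0,1)$ the superprediction set $\Sigma_\lambda$ lies to the Northeast of the shift of the curve $e^{-\eta x}+e^{-\eta y}=1$ that passes through $\Lambda_\pi:=(\lambda(\pi,0),\lambda(\pi,1))$ and has $\Lambda_\pi$ as its $\pi$-point.
   Context: A loss function is a map $\lambda:[0,1]\times\{0,1\}\to[0,\infty]$ satisfying: (1) $\lambda(\gamma,0)$, $\lambda(\gamma,1)$ continuous in $\gamma\in[0,1]$ (standard topology on $[0,\infty]$); (2) some $\gamma$ has both values finite; (3) no $\gamma$ has both values infinite. Superprediction set: $\Sigma_\lambda=\{(x,y)\in[0,\infty)^2:\exists\gamma\ \lambda(\gamma,0)\le x,\ \lambda(\gamma,1)\le y\}$. $\lambda$ is $\eta$-mixable if $\{(e^{-\eta x},e^{-\eta y}):(x,y)\in\Sigma_\lambda\}$ is convex; proper if $\pi\lambda(\pi,1)+(1-\pi)\lambda(\pi,0)\le\pi\lambda(\pi',1)+(1-\pi)\lambda(\pi',0)$ for all $\pi,\pi'\in[0,1]$. For $\pi\in(0,1)$, the $\pi$-point of the curve $e^{-\eta x}+e^{-\eta y}=1$ is $\bigl(-\frac1\eta\ln(1-\pi),-\frac1\eta\ln\pi\bigr)$. A shift of this curve is the curve $e^{-\eta(x-\alpha)}+e^{-\eta(y-\beta)}=1$ for some $(\alpha,\beta)\in\mathbb{R}^2$; its $\pi$-point is $(\alpha,\beta)$ plus the $\pi$-point of the original curve. A point $(x_1,y_1)$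 is Northeast of $(x_2,y_2)$ if $x_1\ge x_2$ and $y_1\ge y_2$; a set $A\subseteq\mathbb{R}^2$ lies to the Northeast of a shift if every point of $A$ is Northeast of some point of the shift. *)

theory Defs
  imports "HOL-Analysis.Analysis" "HOL-Library.Extended_Nonnegative_Real"
begin

text \<open>A loss is modelled as lam :: real => nat => ennreal; only gamma in [0,1] and
  outcomes 0 and 1 are relevant. Values in [0,infinity] are ennreal.\<close>

definition loss_function :: "(real \<Rightarrow> nat \<Rightarrow> ennreal) \<Rightarrow> bool" where
  "loss_function lam \<longleftrightarrow>
     continuous_on {0..1} (\<lambda>g. lam g 0) \<and>
     continuous_on {0..1} (\<lambda>g. lam g 1) \<and>
     (\<exists>g\<in>{0..1}. lam g 0 < top \<and> lam g 1 < top) \<and>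
     (\<forall>g\<in>{0..1}. \<not> (lam g 0 = top \<and> lam g 1 = top))"

definition superpred :: "(real \<Rightarrow> nat \<Rightarrow> ennreal) \<Rightarrow> (real \<times> real) set" where
  "superpred lam = {(x, y). 0 \<le> x \<and> 0 \<le> y \<and>
     (\<exists>g\<in>{0..1}. lam g 0 \<le> ennreal x \<and> lam g 1 \<le> ennreal y)}"

definition mixable :: "real \<Rightarrow> (real \<Rightarrow> nat \<Rightarrow> ennreal) \<Rightarrow> bool" where
  "mixable \<eta> lam \<longleftrightarrow>
     convex ((\<lambda>(x, y). (exp (- \<eta> * x), exp (- \<eta> * y))) ` superpred lam)"

definition proper_loss :: "(real \<Rightarrow> nat \<Rightarrow> ennreal) \<Rightarrow> bool" where
  "proper_loss lam \<longleftrightarrow>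
     (\<forall>p\<in>{0..1}. \<forall>p'\<in>{0..1}.
        ennreal p * lam p 1 + ennreal (1 - p) * lam p 0
          \<le> ennreal p * lam p' 1 + ennreal (1 - p) * lam p' 0)"

definition shift_curve :: "real \<Rightarrow> real \<Rightarrow> real \<Rightarrow> (real \<times> real) set" where
  "shift_curve \<eta> a b = {(x, y). exp (- \<eta> * (x - a)) + exp (- \<eta> * (y - b)) = 1}"

definition shift_pi_point :: "real \<Rightarrow> real \<Rightarrow> real \<Rightarrow> real \<Rightarrow> real \<times> real" where
  "shift_pi_point \<eta> a b p = (a - (1/\<eta>) * ln (1 - p), b - (1/\<eta>) * ln p)"

definition northeast :: "real \<times> real \<Rightarrow> real \<times> real \<Rightarrow> bool" where
  "northeast P Q \<longleftrightarrow> fst Q \<le> fst P \<and> snd Q \<le> snd P"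

definition lies_NE_of :: "(real \<times> real) set \<Rightarrow> (real \<times> real) set \<Rightarrow> bool" where
  "lies_NE_of A C \<longleftrightarrow> (\<forall>P\<in>A. \<exists>Q\<in>C. northeast P Q)"

end

theory Submission imports Defs begin

text \<open>Write \<open>L = (L0, L1)\<close> for \<open>\<Lambda>\<^sub>\<pi>\<close>. The shifted curve with \<pi>-point L bounds the
  superprediction set \<Sigma> from below exactly when
  \<open>(1-\<pi>) exp(-\<eta>(x - L0)) + \<pi> exp(-\<eta>(y - L1)) \<le> 1\<close> on \<Sigma>. By convexity of exp this bound
  makes L a minimiser of the weighted loss \<open>(1-\<pi>) x + \<pi> y\<close> over \<Sigma>. Conversely, if L is such a
  minimiser, then along the segment from \<open>exp(-\<eta> L)\<close> to the image of any other point of \<Sigma>,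
  which stays in the exponentiated set by mixability, the weighted log-coordinates are maximal at
  the start; their right derivative there is non-positive, and that inequality is the bound.
  Finally, \<lambda> is proper iff every interior \<open>\<Lambda>\<^sub>\<pi>\<close> is finite and such a minimiser: at the
  endpoints \<open>\<pi> \<in> {0, 1}\<close> properness follows because the interior condition makes the partial
  losses monotone, and they are continuous.\<close>

lemma has_real_derivative_nonpos_at_right_max:
  fixes f :: "real \<Rightarrow> real"
  assumes "(f has_real_derivative D) (at x)"
    and "\<And>h. 0 < h \<Longrightarrow> h < e \<Longrightarrow> f (x + h) \<le> f x" and "e > 0"
  shows "D \<le> 0"
proof (rule ccontr)
  assume "\<not> D \<le> 0"
  then obtain d where "d > 0" and inc: "\<forall>h>0. h < d \<longrightarrow> f x < f (x + h)"
    using DERIV_pos_inc_right[OF assms(1)] by auto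
  moreover have "0 < min d e / 2" "min d e / 2 < d" "min d e / 2 < e"
    using \<open>d > 0\<close> assms(3) by auto
  ultimately have "f x < f (x + min d e / 2)" by blast
  moreover have "f (x + min d e / 2) \<le> f x"
    using assms(2) \<open>0 < min d e / 2\<close> \<open>min d e / 2 < e\<close> by blast
  ultimately show False by simp
qed

lemma weighted_le_of_exp_bound:
  fixes p \<eta> x y L0 L1 :: real
  assumes "0 \<le> p" "p \<le> 1" "\<eta> > 0"
    and "(1-p) * exp (-\<eta> * (x - L0)) + p * exp (-\<eta> * (y - L1)) \<le> 1"
  shows "(1-p) * L0 + p * L1 \<le> (1-p) * x + p * y"
proof -
  have "exp ((1-p) * (-\<eta> * (x - L0)) + p * (-\<eta> * (y - L1)))
          \<le> (1-p) * exp (-\<eta> * (x - L0)) + p * exp (-\<eta> * (y - L1))"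
    using convex_onD[OF exp_convex, of p "-\<eta> * (x - L0)" "-\<eta> * (y - L1)"] assms(1,2) by simp
  with assms(4) have "exp ((1-p) * (-\<eta> * (x - L0)) + p * (-\<eta> * (y - L1))) \<le> 1"
    by linarith
  then have "(1-p) * (-\<eta> * (x - L0)) + p * (-\<eta> * (y - L1)) \<le> 0"
    by simp
  then have "\<eta> * ((1-p) * L0 + p * L1 - ((1-p) * x + p * y)) \<le> 0"
    by (simp add: algebra_simps)
  with \<open>\<eta> > 0\<close> show ?thesis by (simp add: mult_le_0_iff)
qed

lemma exp_bound_of_weighted_minimizer:
  fixes \<eta> p L0 L1 x y :: real and S :: "(real \<times> real) set"
  assumes "\<eta> > 0"
    and convex: "convex ((\<lambda>(x, y). (exp (-\<eta> * x), exp (-\<eta> * y))) ` S)"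
    and "(L0, L1) \<in> S" and min: "\<forall>(x, y)\<in>S. (1-p) * L0 + p * L1 \<le> (1-p) * x + p * y"
    and "(x, y) \<in> S"
  shows "(1-p) * exp (-\<eta> * (x - L0)) + p * exp (-\<eta> * (y - L1)) \<le> 1"
proof -
  let ?E = "(\<lambda>(x, y). (exp (-\<eta> * x), exp (-\<eta> * y))) ` S"
  define u0 where "u0 = exp (-\<eta> * L0)"
  define w0 where "w0 = exp (-\<eta> * L1)"
  define u where "u = exp (-\<eta> * x)"
  define w where "w = exp (-\<eta> * y)"
  define g where "g t = (1-p) * ln ((1-t) * u0 + t * u) + p * ln ((1-t) * w0 + t * w)" for t
  have pos: "u0 > 0" "w0 > 0" "u > 0" "w > 0"
    by (simp_all add: u0_def w0_def u_def w_def)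
  have "(g has_real_derivative (1-p) * ((u - u0) / u0) + p * ((w - w0) / w0)) (at 0)"
    unfolding g_def by (rule derivative_eq_intros refl | simp add: pos algebra_simps)+
  moreover have "g (0 + t) \<le> g 0" if "0 < t" "t < 1" for t
  proof -
    have "(u0, w0) \<in> ?E" "(u, w) \<in> ?E"
      using assms(3,5) unfolding u0_def w0_def u_def w_def by force+
    then have "(1-t) *\<^sub>R (u0, w0) + t *\<^sub>R (u, w) \<in> ?E"
      using convexD_alt[OF convex, of "(u0, w0)" "(u, w)" t] that by simp
    then obtain x' y' where "(x', y') \<in> S"
      and "(1-t) * u0 + t * u = exp (-\<eta> * x')" "(1-t) * w0 + t * w = exp (-\<eta> * y')"
      by auto
    moreover have "\<eta> * ((1-p) * L0 + p * L1) \<le> \<eta> * ((1-p) * x' + p * y')"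
      using min \<open>(x', y') \<in> S\<close> \<open>\<eta> > 0\<close> by (auto intro: mult_left_mono)
    ultimately show ?thesis
      unfolding g_def u0_def w0_def by (simp add: algebra_simps)
  qed
  ultimately have "(1-p) * ((u - u0) / u0) + p * ((w - w0) / w0) \<le> 0"
    by (rule has_real_derivative_nonpos_at_right_max[where e = 1]) simp_all
  then have "(1-p) * (u / u0) + p * (w / w0) \<le> 1"
    using pos by (simp add: field_simps)
  moreover have "u / u0 = exp (-\<eta> * (x - L0))" "w / w0 = exp (-\<eta> * (y - L1))"
    by (simp_all add: u_def u0_def w_def w0_def exp_diff[symmetric] algebra_simps)
  ultimately show ?thesis by simp
qed

lemma weighted_minimizer_iff_exp_bound:
  fixes \<eta> p L0 L1 :: real and S :: "(real \<times> real) set"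
  assumes "\<eta> > 0" "0 \<le> p" "p \<le> 1"
    and "convex ((\<lambda>(x, y). (exp (-\<eta> * x), exp (-\<eta> * y))) ` S)" and "(L0, L1) \<in> S"
  shows "(\<forall>(x, y)\<in>S. (1-p) * L0 + p * L1 \<le> (1-p) * x + p * y) \<longleftrightarrow>
         (\<forall>(x, y)\<in>S. (1-p) * exp (-\<eta> * (x - L0)) + p * exp (-\<eta> * (y - L1)) \<le> 1)"
  using exp_bound_of_weighted_minimizer[OF assms(1,4,5)] weighted_le_of_exp_bound[OF assms(2,3,1)]
  by blast

lemma lies_NE_of_shift_curve_iff:
  fixes \<eta> a b :: real and S :: "(real \<times> real) set"
  assumes "\<eta> > 0"
  shows "lies_NE_of S (shift_curve \<eta> a b) \<longleftrightarrow>
         (\<forall>(x, y)\<in>S. exp (-\<eta> * (x - a)) + exp (-\<eta> * (y - b)) \<le> 1)"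
proof
  assume NE: "lies_NE_of S (shift_curve \<eta> a b)"
  show "\<forall>(x, y)\<in>S. exp (-\<eta> * (x - a)) + exp (-\<eta> * (y - b)) \<le> 1"
  proof clarify
    fix x y assume "(x, y) \<in> S"
    then obtain qx qy where on: "exp (-\<eta> * (qx - a)) + exp (-\<eta> * (qy - b)) = 1"
      and "qx \<le> x" "qy \<le> y"
      using NE unfolding lies_NE_of_def shift_curve_def northeast_def by force
    then have "exp (-\<eta> * (x - a)) \<le> exp (-\<eta> * (qx - a))" "exp (-\<eta> * (y - b)) \<le> exp (-\<eta> * (qy - b))"
      using \<open>\<eta> > 0\<close> by (simp_all add: mult_left_mono)
    with on show "exp (-\<eta> * (x - a)) + exp (-\<eta> * (y - b)) \<le> 1" by linarith
  qed
next
  assume bound: "\<forall>(x, y)\<in>S. exp (-\<eta> * (x - a)) + exp (-\<eta> * (y - b)) \<le> 1"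
  show "lies_NE_of S (shift_curve \<eta> a b)"
    unfolding lies_NE_of_def
  proof clarify
    fix x y assume "(x, y) \<in> S"
    define e where "e = exp (-\<eta> * (x - a))"
    have le: "exp (-\<eta> * (y - b)) \<le> 1 - e"
      using bound \<open>(x, y) \<in> S\<close> by (auto simp: e_def)
    then have "1 - e > 0" by (smt (verit) exp_gt_zero)
    text \<open>The point of the curve straight below \<open>(x, y)\<close>.\<close>
    define y' where "y' = b - ln (1 - e) / \<eta>"
    have "exp (-\<eta> * (y' - b)) = 1 - e"
      unfolding y'_def using \<open>\<eta> > 0\<close> \<open>1 - e > 0\<close> by simp
    then have "(x, y') \<in> shift_curve \<eta> a b"
      unfolding shift_curve_def e_def by simp
    moreover have "-\<eta> * (y - b) \<le> ln (1 - e)"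
      using le \<open>1 - e > 0\<close> by (metis ln_exp ln_le_cancel_iff exp_gt_zero)
    then have "y' \<le> y"
      unfolding y'_def using \<open>\<eta> > 0\<close> by (simp add: field_simps)
    ultimately show "\<exists>Q\<in>shift_curve \<eta> a b. northeast (x, y) Q"
      unfolding northeast_def by force
  qed
qed

lemma pi_point_shift_curve_iff:
  fixes \<eta> p L0 L1 :: real and S :: "(real \<times> real) set"
  assumes "\<eta> > 0" "0 < p" "p < 1"
  shows "(\<exists>a b. shift_pi_point \<eta> a b p = (L0, L1) \<and> lies_NE_of S (shift_curve \<eta> a b)) \<longleftrightarrow>
         (\<forall>(x, y)\<in>S. (1-p) * exp (-\<eta> * (x - L0)) + p * exp (-\<eta> * (y - L1)) \<le> 1)"
proof -
  define a where "a = L0 + ln (1-p) / \<eta>"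
  define b where "b = L1 + ln p / \<eta>"
  have "shift_pi_point \<eta> a' b' p = (L0, L1) \<longleftrightarrow> a' = a \<and> b' = b" for a' b'
    unfolding shift_pi_point_def a_def b_def using assms(1) by (auto simp: field_simps)
  moreover have "exp (-\<eta> * (x - a)) = (1-p) * exp (-\<eta> * (x - L0))" for x
  proof -
    have "-\<eta> * (x - a) = ln (1-p) + -\<eta> * (x - L0)"
      unfolding a_def using assms(1) by (simp add: field_simps)
    then have "exp (-\<eta> * (x - a)) = exp (ln (1-p)) * exp (-\<eta> * (x - L0))"
      by (metis exp_add)
    then show ?thesis using assms(3) by simp
  qed
  moreover have "exp (-\<eta> * (y - b)) = p * exp (-\<eta> * (y - L1))" for y
  proof -
    have "-\<eta> * (y - b) = ln p + -\<eta> * (y - L1)"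
      unfolding b_def using assms(1) by (simp add: field_simps)
    then have "exp (-\<eta> * (y - b)) = exp (ln p) * exp (-\<eta> * (y - L1))"
      by (metis exp_add)
    then show ?thesis using assms(2) by simp
  qed
  ultimately show ?thesis
    using lies_NE_of_shift_curve_iff[OF assms(1), of S a b] by auto
qed

lemma ennreal_weighted_le_iff:
  fixes p a0 a1 b0 b1 :: real
  assumes "0 \<le> p" "p \<le> 1" "0 \<le> a0" "0 \<le> a1" "0 \<le> b0" "0 \<le> b1"
  shows "ennreal p * ennreal a1 + ennreal (1-p) * ennreal a0 \<le> ennreal p * ennreal b1 + ennreal (1-p) * ennreal b0
     \<longleftrightarrow> p * a1 + (1-p) * a0 \<le> p * b1 + (1-p) * b0"
proof -
  have "ennreal p * ennreal c1 + ennreal (1-p) * ennreal c0 = ennreal (p * c1 + (1-p) * c0)"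
    if "0 \<le> c0" "0 \<le> c1" for c0 c1
    using that assms(1,2) by (simp add: ennreal_mult ennreal_plus)
  moreover have "0 \<le> p * b1 + (1-p) * b0" using assms by simp
  ultimately show ?thesis using assms(3-6) by (simp add: ennreal_le_iff)
qed

lemma loss_point_in_superpred:
  assumes "g \<in> {0..1}" "lam g 0 \<noteq> top" "lam g 1 \<noteq> top"
  shows "(enn2real (lam g 0), enn2real (lam g 1)) \<in> superpred lam"
  using assms unfolding superpred_def by (auto simp: less_top)

lemma proper_loss_finite:
  assumes "loss_function lam" "proper_loss lam" "0 < p" "p < 1"
  shows "lam p 0 \<noteq> top" "lam p 1 \<noteq> top"
proof -
  obtain g where g: "g \<in> {0..1}" "lam g 0 < top" "lam g 1 < top"
    using assms(1) unfolding loss_function_def by auto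
  have "ennreal p * lam p 1 + ennreal (1-p) * lam p 0 \<le> ennreal p * lam g 1 + ennreal (1-p) * lam g 0"
    using assms(2-4) g(1) unfolding proper_loss_def by auto
  also have "\<dots> < top"
    using g by (simp add: ennreal_mult_less_top)
  finally show "lam p 0 \<noteq> top" "lam p 1 \<noteq> top"
    using assms(3,4) by (auto simp: ennreal_mult_eq_top_iff)
qed

lemma proper_loss_weighted_minimizer:
  assumes "proper_loss lam" "0 \<le> p" "p \<le> 1" "lam p 0 \<noteq> top" "lam p 1 \<noteq> top"
    and "(x, y) \<in> superpred lam"
  shows "(1-p) * enn2real (lam p 0) + p * enn2real (lam p 1) \<le> (1-p) * x + p * y"
proof -
  obtain g where g: "g \<in> {0..1}" "lam g 0 \<le> ennreal x" "lam g 1 \<le> ennreal y" and "0 \<le> x" "0 \<le> y"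
    using assms(6) unfolding superpred_def by blast
  have "ennreal p * lam p 1 + ennreal (1-p) * lam p 0 \<le> ennreal p * lam g 1 + ennreal (1-p) * lam g 0"
    using assms(1-3) g(1) unfolding proper_loss_def by auto
  also have "\<dots> \<le> ennreal p * ennreal y + ennreal (1-p) * ennreal x"
    using g by (intro add_mono mult_left_mono) auto
  finally show ?thesis
    using ennreal_weighted_le_iff[of p "enn2real (lam p 0)" "enn2real (lam p 1)" x y]
      assms(2-5) \<open>0 \<le> x\<close> \<open>0 \<le> y\<close> by (simp add: ennreal_enn2real_if)
qed

lemma weighted_minimizers_monotone:
  fixes q r Aq Bq Ar Br :: real
  assumes "0 < q" "q < r" "r < 1"
    and "(1-q) * Aq + q * Bq \<le> (1-q) * Ar + q * Br"
    and "(1-r) * Ar + r * Br \<le> (1-r) * Aq + r * Bq"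
  shows "Aq \<le> Ar" "Br \<le> Bq"
proof -
  define D where "D = Ar - Aq"
  define E where "E = Bq - Br"
  have q_ineq: "q * E \<le> (1-q) * D" and r_ineq: "(1-r) * D \<le> r * E"
    using assms(4,5) unfolding D_def E_def by (simp_all add: algebra_simps)
  have "r * (q * E) \<le> r * ((1-q) * D)" "q * ((1-r) * D) \<le> q * (r * E)"
    using q_ineq r_ineq assms(1-3) by (simp_all add: mult_left_mono)
  then have "(r - q) * D \<ge> 0" by (simp add: algebra_simps)
  then have "D \<ge> 0" using assms(2) by (simp add: zero_le_mult_iff)
  then show "Aq \<le> Ar" unfolding D_def by simp
  have "r * E \<ge> 0" using r_ineq \<open>D \<ge> 0\<close> assms(3) by (smt (verit) mult_nonneg_nonneg)
  then show "Br \<le> Bq" using assms(1,2) unfolding E_def by (simp add: zero_le_mult_iff)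
qed

lemma continuous_on_interior_mono_imp_le_left:
  fixes f :: "real \<Rightarrow> 'a::linorder_topology"
  assumes cont: "continuous_on {0..1} f"
    and mono: "\<And>q r. 0 < q \<Longrightarrow> q \<le> r \<Longrightarrow> r < 1 \<Longrightarrow> f q \<le> f r"
    and "0 \<le> x" "x \<le> 1"
  shows "f 0 \<le> f x"
proof -
  have left: "(f \<longlongrightarrow> f 1) (at_left 1)" and right: "(f \<longlongrightarrow> f 0) (at_right 0)"
    using cont unfolding continuous_on_def
    by (metis at_within_Icc_at_left at_within_Icc_at_right zero_less_one atLeastAtMost_iff
        order_refl zero_le_one)+
  have "f q \<le> f 1" if "0 < q" "q < 1" for q
    by (rule tendsto_lowerbound[OF left])
      (use that mono in \<open>auto simp: eventually_at_left_field intro!: exI[of _ q]\<close>)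
  then have below_x: "f q \<le> f x" if "0 < q" "q < x" for q
    using that mono[of q x] assms(3,4) by (cases "x < 1") auto
  show ?thesis
  proof (cases "x = 0")
    case False
    then show ?thesis
      by (intro tendsto_upperbound[OF right])
        (use below_x assms(3) in \<open>auto simp: eventually_at_right_field intro!: exI[of _ x]\<close>)
  qed simp
qed

lemma weighted_minimizer_imp_weighted_loss_le:
  assumes "0 < p" "p < 1" "lam p 0 \<noteq> top" "lam p 1 \<noteq> top" "p' \<in> {0..1}"
    and min: "\<forall>(x, y)\<in>superpred lam.
       (1-p) * enn2real (lam p 0) + p * enn2real (lam p 1) \<le> (1-p) * x + p * y"
  shows "ennreal p * lam p 1 + ennreal (1-p) * lam p 0 \<le> ennreal p * lam p' 1 + ennreal (1-p) * lam p' 0"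
proof (cases "lam p' 0 = top \<or> lam p' 1 = top")
  case True
  then show ?thesis using assms(1,2) by (auto simp: ennreal_mult_eq_top_iff)
next
  case False
  then have "(1-p) * enn2real (lam p 0) + p * enn2real (lam p 1)
      \<le> (1-p) * enn2real (lam p' 0) + p * enn2real (lam p' 1)"
    using min loss_point_in_superpred[OF assms(5)] by blast
  then show ?thesis
    using ennreal_weighted_le_iff[of p "enn2real (lam p 0)" "enn2real (lam p 1)"
        "enn2real (lam p' 0)" "enn2real (lam p' 1)"] False assms(1-4)
    by (simp add: ennreal_enn2real_if algebra_simps del: One_nat_def)
qed

lemma partial_losses_minimal_at_endpoints:
  assumes "loss_function lam"
    and fin: "\<And>p. 0 < p \<Longrightarrow> p < 1 \<Longrightarrow> lam p 0 \<noteq> top \<and> lam p 1 \<noteq> top"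
    and min: "\<And>p x y. 0 < p \<Longrightarrow> p < 1 \<Longrightarrow> (x, y) \<in> superpred lam \<Longrightarrow>
       (1-p) * enn2real (lam p 0) + p * enn2real (lam p 1) \<le> (1-p) * x + p * y"
    and "p' \<in> {0..1}"
  shows "lam 0 0 \<le> lam p' 0" "lam 1 1 \<le> lam p' 1"
proof -
  define A where "A q = enn2real (lam q 0)" for q
  define B where "B q = enn2real (lam q 1)" for q
  have lam_eq: "lam q 0 = ennreal (A q)" "lam q 1 = ennreal (B q)" if "0 < q" "q < 1" for q
    using fin[OF that] by (simp_all add: A_def B_def less_top)
  have in_superpred: "(A q, B q) \<in> superpred lam" if "0 < q" "q < 1" for q
    unfolding A_def B_def using that fin[OF that] by (intro loss_point_in_superpred) auto
  have min_AB: "(1-q) * A q + q * B q \<le> (1-q) * A r + q * B r" if "0 < q" "q < 1" "0 < r" "r < 1" for q r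
    using min[OF that(1,2) in_superpred[OF that(3,4)]] unfolding A_def B_def .
  have mono: "A q \<le> A r" "B r \<le> B q" if "0 < q" "q < r" "r < 1" for q r
    using weighted_minimizers_monotone[OF that min_AB min_AB] that by auto
  have "lam q 0 \<le> lam r 0" if "0 < q" "q \<le> r" "r < 1" for q r
  proof (cases "q = r")
    case False
    then have "A q \<le> A r" using that mono(1)[of q r] by simp
    then show ?thesis using lam_eq(1)[of q] lam_eq(1)[of r] that by (simp add: ennreal_leI)
  qed simp
  moreover have "continuous_on {0..1} (\<lambda>g. lam g 0)"
    using assms(1) unfolding loss_function_def by blast
  ultimately show "lam 0 0 \<le> lam p' 0"
    using continuous_on_interior_mono_imp_le_left[of "\<lambda>g. lam g 0" p'] assms(4) by auto
  have "lam (1-q) 1 \<le> lam (1-r) 1" if "0 < q" "q \<le> r" "r < 1" for q r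
  proof (cases "q = r")
    case False
    then have "B (1-q) \<le> B (1-r)" using that mono(2)[of "1-r" "1-q"] by simp
    then show ?thesis using lam_eq(2)[of "1-q"] lam_eq(2)[of "1-r"] that by (simp add: ennreal_leI)
  qed simp
  moreover have "continuous_on {0..1} (\<lambda>g. lam (1-g) 1)"
  proof (rule continuous_on_compose2[of "{0..1}" "\<lambda>g. lam g 1"])
    show "continuous_on {0..1} (\<lambda>g. lam g 1)"
      using assms(1) unfolding loss_function_def by blast
  qed (auto intro!: continuous_intros)
  ultimately show "lam 1 1 \<le> lam p' 1"
    using continuous_on_interior_mono_imp_le_left[of "\<lambda>g. lam (1-g) 1" "1-p'"] assms(4) by auto
qed

lemma proper_loss_if_interior_weighted_minimizers:
  assumes "loss_function lam"
    and fin: "\<And>p. 0 < p \<Longrightarrow> p < 1 \<Longrightarrow> lam p 0 \<noteq> top \<and> lam p 1 \<noteq> top"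
    and min: "\<And>p x y. 0 < p \<Longrightarrow> p < 1 \<Longrightarrow> (x, y) \<in> superpred lam \<Longrightarrow>
       (1-p) * enn2real (lam p 0) + p * enn2real (lam p 1) \<le> (1-p) * x + p * y"
  shows "proper_loss lam"
  unfolding proper_loss_def
proof (intro ballI)
  fix p p' :: real assume "p \<in> {0..1}" "p' \<in> {0..1}"
  then consider "p = 0" | "p = 1" | "0 < p \<and> p < 1" by force
  then show "ennreal p * lam p 1 + ennreal (1-p) * lam p 0 \<le> ennreal p * lam p' 1 + ennreal (1-p) * lam p' 0"
  proof cases
    case 3
    then have p: "0 < p" "p < 1" by simp_all
    have "lam p 0 \<noteq> top" "lam p 1 \<noteq> top"
      using fin[OF p] by simp_all
    moreover have "\<forall>(x, y)\<in>superpred lam.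
        (1-p) * enn2real (lam p 0) + p * enn2real (lam p 1) \<le> (1-p) * x + p * y"
      using min[OF p] by blast
    ultimately show ?thesis
      by (rule weighted_minimizer_imp_weighted_loss_le[of p lam p', OF p _ _ \<open>p' \<in> {0..1}\<close>])
  next
    case 1
    have "lam 0 0 \<le> lam p' 0"
      by (rule partial_losses_minimal_at_endpoints(1)[OF assms \<open>p' \<in> {0..1}\<close>])
    with 1 show ?thesis by simp
  next
    case 2
    have "lam 1 1 \<le> lam p' 1"
      by (rule partial_losses_minimal_at_endpoints(2)[OF assms \<open>p' \<in> {0..1}\<close>])
    with 2 show ?thesis by simp
  qed
qed

lemma proper_loss_iff_interior_weighted_minimizers:
  assumes "loss_function lam"
  shows "proper_loss lam \<longleftrightarrow>
    (\<forall>p\<in>{0<..<1}. lam p 0 \<noteq> top \<and> lam p 1 \<noteq> top \<and>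
       (\<forall>(x, y)\<in>superpred lam. (1-p) * enn2real (lam p 0) + p * enn2real (lam p 1) \<le> (1-p) * x + p * y))"
proof
  assume "proper_loss lam"
  then show "\<forall>p\<in>{0<..<1}. lam p 0 \<noteq> top \<and> lam p 1 \<noteq> top \<and>
     (\<forall>(x, y)\<in>superpred lam. (1-p) * enn2real (lam p 0) + p * enn2real (lam p 1) \<le> (1-p) * x + p * y)"
    using proper_loss_finite[OF assms] proper_loss_weighted_minimizer by fastforce
next
  assume H: "\<forall>p\<in>{0<..<1}. lam p 0 \<noteq> top \<and> lam p 1 \<noteq> top \<and>
     (\<forall>(x, y)\<in>superpred lam. (1-p) * enn2real (lam p 0) + p * enn2real (lam p 1) \<le> (1-p) * x + p * y)"
  show "proper_loss lam"
  proof (rule proper_loss_if_interior_weighted_minimizers[OF assms])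
    fix p x y :: real assume "0 < p" "p < 1" "(x, y) \<in> superpred lam"
    then show "(1-p) * enn2real (lam p 0) + p * enn2real (lam p 1) \<le> (1-p) * x + p * y"
      using H by fastforce
  qed (use H in auto)
qed

theorem lemma2:
  fixes \<eta> :: real and lam :: "real \<Rightarrow> nat \<Rightarrow> ennreal"
  assumes "\<eta> > 0" and "loss_function lam" and "mixable \<eta> lam"
  shows "proper_loss lam \<longleftrightarrow>
    (\<forall>p\<in>{0<..<1}. lam p 0 \<noteq> top \<and> lam p 1 \<noteq> top \<and>
       (\<exists>a b. shift_pi_point \<eta> a b p = (enn2real (lam p 0), enn2real (lam p 1)) \<and>
              lies_NE_of (superpred lam) (shift_curve \<eta> a b)))"
proof -
  have "(\<forall>(x, y)\<in>superpred lam. (1-p) * enn2real (lam p 0) + p * enn2real (lam p 1) \<le> (1-p) * x + p * y)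
    \<longleftrightarrow> (\<exists>a b. shift_pi_point \<eta> a b p = (enn2real (lam p 0), enn2real (lam p 1)) \<and>
              lies_NE_of (superpred lam) (shift_curve \<eta> a b))"
    if "p \<in> {0<..<1}" "lam p 0 \<noteq> top" "lam p 1 \<noteq> top" for p
  proof -
    have "0 < p" "p < 1" using that(1) by auto
    have "(enn2real (lam p 0), enn2real (lam p 1)) \<in> superpred lam"
      using \<open>0 < p\<close> \<open>p < 1\<close> that(2,3) by (intro loss_point_in_superpred) auto
    then show ?thesis
      using weighted_minimizer_iff_exp_bound[OF assms(1) _ _ assms(3)[unfolded mixable_def]]
        pi_point_shift_curve_iff[OF assms(1) \<open>0 < p\<close> \<open>p < 1\<close>] \<open>0 < p\<close> \<open>p < 1\<close>
      by simp
  qed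
  then show ?thesis
    unfolding proper_loss_iff_interior_weighted_minimizers[OF assms(2)]
    by (intro ball_cong refl) blast
qed

end
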